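(* Let $V$ be a real vector space of dimension $n$ and $1\le k\le n-1$. Let $E\subseteq V$ be a subspace, $A\subseteq \mathrm{Ann}(E)$ a subspace, and $\varepsilon: E\to \wedge^k V^*/A$ a linear map which is $E$-skew. Then $$L(E,A,\varepsilon)=\{X+\alpha \mid X\in E,\ \alpha + A=\varepsilon(X)\}\subseteq V\oplus \wedge^kV^*$$ is isotropic. Conversely, every isotropic subspace $L\subseteq V\oplus\wedge^kV^*$ is of the form $L(E,A_L,\varepsilon)$ with $E=\mathrm{pr}_1(L)$, $A_L=L\cap\wedge^kV^*$, and $\varepsilon:E\to\wedge^kV^*/A_L$ defined by $\varepsilon(X)=\alpha+A_L$ whenever $X+\alpha\in L$ (this $\varepsilon$ being well defined, linear and $E$-skew).
   Context: On $V\oplus\wedge^kV^*$ consider the symmetric $\wedge^{k-1}V^*$-valued pairing $\langle X+\alpha,Y+\beta\rangle=i_X\beta+i_Y\alpha$. For a subspace $L$, $L^\perp$ is its orthogonal with respect to this pairing, and $L$ is isotropic if $L\subseteq L^\perp$. $\mathrm{pr}_1,\mathrm{pr}_2$ denote the projections to $V$ and $\wedge^kV^*$. For $E\subseteq V$, $\mathrm{Ann}(E)=\{\alpha\in\wedge^kV^*\mid i_Y\alpha=0\ \forall Y\in E\}$. For $A\subseteq\mathrm{Ann}(E)$, let $\iota_E:\wedge^kV^*/A\to E^*\otimes\wedge^{k-1}V^*$, $\alpha+A\mapsto (X\mapsto i_X\alpha)$. A linear map $\varepsilon:E\to\wedge^kV^*/A$ is called $E$-skew if $\iota_E\circ\varepsilon\in\wedge^2E^*\otimes\wedge^{k-1}V^*$,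 i.e. $i_Y(\varepsilon(X))=-i_X(\varepsilon(Y))$ for all $X,Y\in E$. *)

theory Defs
  imports "HOL-Analysis.Analysis"
begin

text \<open>Forms of degree k on V: functions of a sequence of vectors that depend only
  on the first k entries, are linear in each of them, and vanish when two of the
  first k entries coincide (alternating).  The set of them is \<wedge>^k V^*.\<close>

type_synonym 'v form = "(nat \<Rightarrow> 'v) \<Rightarrow> real"

definition kform :: "nat \<Rightarrow> ('v::real_vector) form \<Rightarrow> bool" where
  "kform k \<alpha> \<longleftrightarrow>
     (\<forall>vs ws. (\<forall>i<k. vs i = ws i) \<longrightarrow> \<alpha> vs = \<alpha> ws) \<and>
     (\<forall>i<k. \<forall>vs. linear (\<lambda>x. \<alpha> (vs(i := x)))) \<and>
     (\<forall>vs i j. i < k \<and> j < k \<and> i \<noteq> j \<and> vs i = vs j \<longrightarrow> \<alpha> vs = 0)"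

definition fzero :: "'v form" where "fzero = (\<lambda>vs. 0)"
definition fadd :: "'v form \<Rightarrow> 'v form \<Rightarrow> 'v form" where
  "fadd \<alpha> \<beta> = (\<lambda>vs. \<alpha> vs + \<beta> vs)"
definition fscale :: "real \<Rightarrow> 'v form \<Rightarrow> 'v form" where
  "fscale c \<alpha> = (\<lambda>vs. c * \<alpha> vs)"
definition fneg :: "'v form \<Rightarrow> 'v form" where
  "fneg \<alpha> = (\<lambda>vs. - \<alpha> vs)"

definition contr :: "'v \<Rightarrow> 'v form \<Rightarrow> 'v form" where
  "contr X \<alpha> = (\<lambda>vs. \<alpha> (\<lambda>i. if i = 0 then X else vs (i - 1)))"

definition pairing :: "('v \<times> 'v form) \<Rightarrow> ('v \<times> 'v form) \<Rightarrow> 'v form" where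
  "pairing p q = fadd (contr (fst p) (snd q)) (contr (fst q) (snd p))"

definition form_subspace :: "nat \<Rightarrow> ('v::real_vector) form set \<Rightarrow> bool" where
  "form_subspace k A \<longleftrightarrow> (\<forall>\<alpha>\<in>A. kform k \<alpha>) \<and> fzero \<in> A \<and>
     (\<forall>\<alpha>\<in>A. \<forall>\<beta>\<in>A. fadd \<alpha> \<beta> \<in> A) \<and> (\<forall>c. \<forall>\<alpha>\<in>A. fscale c \<alpha> \<in> A)"

definition sum_subspace :: "nat \<Rightarrow> (('v::real_vector) \<times> 'v form) set \<Rightarrow> bool" where
  "sum_subspace k L \<longleftrightarrow> (\<forall>p\<in>L. kform k (snd p)) \<and> (0, fzero) \<in> L \<and>
     (\<forall>p\<in>L. \<forall>q\<in>L. (fst p + fst q, fadd (snd p) (snd q)) \<in> L) \<and>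
     (\<forall>c. \<forall>p\<in>L. (c *\<^sub>R fst p, fscale c (snd p)) \<in> L)"

definition perp :: "nat \<Rightarrow> (('v::real_vector) \<times> 'v form) set \<Rightarrow> ('v \<times> 'v form) set" where
  "perp k L = {q. kform k (snd q) \<and> (\<forall>p\<in>L. pairing p q = fzero)}"

definition isotropic :: "nat \<Rightarrow> (('v::real_vector) \<times> 'v form) set \<Rightarrow> bool" where
  "isotropic k L \<longleftrightarrow> L \<subseteq> perp k L"

definition Ann :: "nat \<Rightarrow> ('v::real_vector) set \<Rightarrow> 'v form set" where
  "Ann k E = {\<alpha>. kform k \<alpha> \<and> (\<forall>Y\<in>E. contr Y \<alpha> = fzero)}"

text \<open>Elements of the quotient \<wedge>^k V^*/A are represented as cosets \<alpha> + A.\<close>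
definition coset :: "'v form set \<Rightarrow> 'v form \<Rightarrow> 'v form set" where
  "coset A \<alpha> = fadd \<alpha> ` A"

text \<open>A linear map \<epsilon> : E \<rightarrow> \<wedge>^k V^*/A (values outside E are irrelevant).\<close>
definition quot_linear_on :: "nat \<Rightarrow> ('v::real_vector) set \<Rightarrow> 'v form set \<Rightarrow> ('v \<Rightarrow> 'v form set) \<Rightarrow> bool" where
  "quot_linear_on k E A \<epsilon> \<longleftrightarrow>
     (\<forall>X\<in>E. \<exists>\<alpha>. kform k \<alpha> \<and> \<epsilon> X = coset A \<alpha>) \<and>
     (\<forall>X\<in>E. \<forall>Y\<in>E. \<forall>\<alpha>\<in>\<epsilon> X. \<forall>\<beta>\<in>\<epsilon> Y. \<epsilon> (X + Y) = coset A (fadd \<alpha> \<beta>)) \<and>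
     (\<forall>X\<in>E. \<forall>c. \<forall>\<alpha>\<in>\<epsilon> X. \<epsilon> (c *\<^sub>R X) = coset A (fscale c \<alpha>))"

text \<open>E-skew: i_Y(\<epsilon>(X)) = - i_X(\<epsilon>(Y)), computed on representatives
  (well defined since A \<subseteq> Ann(E)).\<close>
definition E_skew :: "('v::real_vector) set \<Rightarrow> ('v \<Rightarrow> 'v form set) \<Rightarrow> bool" where
  "E_skew E \<epsilon> \<longleftrightarrow>
     (\<forall>X\<in>E. \<forall>Y\<in>E. \<forall>\<alpha>\<in>\<epsilon> X. \<forall>\<beta>\<in>\<epsilon> Y. contr Y \<alpha> = fneg (contr X \<beta>))"

definition Lset :: "nat \<Rightarrow> ('v::real_vector) set \<Rightarrow> 'v form set \<Rightarrow> ('v \<Rightarrow> 'v form set) \<Rightarrow> ('v \<times> 'v form) set" where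
  "Lset k E A \<epsilon> = {(X, \<alpha>). X \<in> E \<and> kform k \<alpha> \<and> coset A \<alpha> = \<epsilon> X}"

end

theory Submission
  imports Defs
begin

text \<open>For the first part, the pairing of two elements X + \<alpha>, Y + \<beta> of L(E, A, \<epsilon>) is
  i_X \<beta> + i_Y \<alpha>, which vanishes by E-skewness of \<epsilon> since \<alpha> \<in> \<epsilon>(X) and \<beta> \<in> \<epsilon>(Y).
  For the converse, the fibres {\<alpha>. X + \<alpha> \<in> L} of an arbitrary subspace L are
  cosets of A_L, so they define a linear map \<epsilon> on pr_1(L) with L = L(E, A_L, \<epsilon>);
  isotropy of L gives E-skewness of \<epsilon>, and pairing X + \<beta> with 0 + \<alpha> for \<alpha> \<in> A_L
  gives i_X \<alpha> = 0, i.e. A_L \<subseteq> Ann(E), because i_0 \<beta> = 0 for forms of degree k \<ge> 1.\<close>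

lemma fadd_fzero [simp]: "fadd \<alpha> fzero = \<alpha>"
  by (simp add: fadd_def fzero_def)

lemma mem_coset_self: "fzero \<in> A \<Longrightarrow> \<alpha> \<in> coset A \<alpha>"
  unfolding coset_def by (metis fadd_fzero image_eqI)

lemma contr_zero:
  fixes \<beta> :: "('v::real_vector) form"
  assumes "kform k \<beta>" and "1 \<le> k"
  shows "contr 0 \<beta> = fzero"
proof
  fix vs :: "nat \<Rightarrow> 'v"
  have "linear (\<lambda>x. \<beta> ((\<lambda>i. vs (i - 1))(0 := x)))"
    using assms unfolding kform_def by auto
  moreover have "(\<lambda>i. if i = 0 then 0 else vs (i - 1)) = (\<lambda>i. vs (i - 1))(0 := 0)"
    by auto
  ultimately show "contr 0 \<beta> vs = fzero vs"
    unfolding contr_def fzero_def by (metis linear_0)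
qed

lemma pairing_eq_fzero_iff: "pairing (Y, \<beta>) (X, \<alpha>) = fzero \<longleftrightarrow> contr Y \<alpha> = fneg (contr X \<beta>)"
  unfolding pairing_def fadd_def fneg_def fzero_def fun_eq_iff
  by (simp add: eq_neg_iff_add_eq_0)

lemma isotropic_Lset:
  assumes "fzero \<in> A" and "E_skew E \<epsilon>"
  shows "isotropic k (Lset k E A \<epsilon>)"
  unfolding isotropic_def perp_def
proof (intro subsetI CollectI conjI ballI)
  fix q p assume q: "q \<in> Lset k E A \<epsilon>" and p: "p \<in> Lset k E A \<epsilon>"
  obtain X \<alpha> Y \<beta> where qp: "q = (X, \<alpha>)" "p = (Y, \<beta>)" by force
  with q p have "X \<in> E" "Y \<in> E" "\<alpha> \<in> \<epsilon> X" "\<beta> \<in> \<epsilon> Y"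
    using mem_coset_self[OF assms(1)] unfolding Lset_def by auto
  then show "pairing p q = fzero"
    using assms(2) unfolding qp pairing_eq_fzero_iff E_skew_def by blast
next
  fix q assume "q \<in> Lset k E A \<epsilon>"
  then show "kform k (snd q)" unfolding Lset_def by auto
qed

context
  fixes k :: nat and L :: "(('v::real_vector) \<times> 'v form) set"
  assumes L: "sum_subspace k L"
begin

lemma sum_subspace_kform: "(X, \<alpha>) \<in> L \<Longrightarrow> kform k \<alpha>"
  using L unfolding sum_subspace_def by force

lemma sum_subspace_zero: "(0, fzero) \<in> L"
  using L unfolding sum_subspace_def by blast

lemma sum_subspace_add: "(X, \<alpha>) \<in> L \<Longrightarrow> (Y, \<beta>) \<in> L \<Longrightarrow> (X + Y, fadd \<alpha> \<beta>) \<in> L"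
  using L unfolding sum_subspace_def by force

lemma sum_subspace_scale: "(X, \<alpha>) \<in> L \<Longrightarrow> (c *\<^sub>R X, fscale c \<alpha>) \<in> L"
  using L unfolding sum_subspace_def by force

lemma subspace_fst_image: "subspace (fst ` L)"
  unfolding subspace_def
proof (intro conjI ballI allI)
  show "0 \<in> fst ` L"
    using sum_subspace_zero by force
next
  fix X Y assume "X \<in> fst ` L" "Y \<in> fst ` L"
  then obtain \<alpha> \<beta> where "(X, \<alpha>) \<in> L" "(Y, \<beta>) \<in> L" by force
  then show "X + Y \<in> fst ` L"
    using sum_subspace_add by force
next
  fix c X assume "X \<in> fst ` L"
  then obtain \<alpha> where "(X, \<alpha>) \<in> L" by force
  then show "c *\<^sub>R X \<in> fst ` L"
    using sum_subspace_scale by force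
qed

lemma form_subspace_zero_fibre: "form_subspace k {\<alpha>. (0, \<alpha>) \<in> L}"
  unfolding form_subspace_def
  using sum_subspace_kform sum_subspace_zero sum_subspace_add[of 0 _ 0] sum_subspace_scale[of 0]
  by auto

lemma fibre_eq_coset:
  assumes X\<alpha>: "(X, \<alpha>) \<in> L"
  shows "{\<beta>. (X, \<beta>) \<in> L} = coset {\<gamma>. (0, \<gamma>) \<in> L} \<alpha>"
proof (intro set_eqI iffI)
  fix \<beta> assume "\<beta> \<in> {\<beta>. (X, \<beta>) \<in> L}"
  then have "(X + (-1) *\<^sub>R X, fadd \<beta> (fscale (-1) \<alpha>)) \<in> L"
    using sum_subspace_add sum_subspace_scale[OF X\<alpha>] by blast
  moreover have "\<beta> = fadd \<alpha> (fadd \<beta> (fscale (-1) \<alpha>))"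
    by (simp add: fadd_def fscale_def)
  ultimately show "\<beta> \<in> coset {\<gamma>. (0, \<gamma>) \<in> L} \<alpha>"
    unfolding coset_def by auto
next
  fix \<beta> assume "\<beta> \<in> coset {\<gamma>. (0, \<gamma>) \<in> L} \<alpha>"
  then obtain \<gamma> where "(0, \<gamma>) \<in> L" "\<beta> = fadd \<alpha> \<gamma>"
    unfolding coset_def by blast
  then show "\<beta> \<in> {\<beta>. (X, \<beta>) \<in> L}"
    using sum_subspace_add[OF X\<alpha>] by force
qed

lemma quot_linear_on_fibres:
  "quot_linear_on k (fst ` L) {\<alpha>. (0, \<alpha>) \<in> L} (\<lambda>X. {\<alpha>. (X, \<alpha>) \<in> L})"
  unfolding quot_linear_on_def
proof (intro conjI ballI allI)
  fix X assume "X \<in> fst ` L"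
  then obtain \<alpha> where "(X, \<alpha>) \<in> L" by force
  then show "\<exists>\<alpha>. kform k \<alpha> \<and> {\<alpha>. (X, \<alpha>) \<in> L} = coset {\<alpha>. (0, \<alpha>) \<in> L} \<alpha>"
    using sum_subspace_kform fibre_eq_coset by blast
qed (simp_all add: fibre_eq_coset sum_subspace_add sum_subspace_scale)

lemma Lset_fibres: "L = Lset k (fst ` L) {\<alpha>. (0, \<alpha>) \<in> L} (\<lambda>X. {\<alpha>. (X, \<alpha>) \<in> L})"
proof (intro set_eqI iffI)
  fix p assume "p \<in> L"
  moreover obtain X \<alpha> where "p = (X, \<alpha>)" by force
  ultimately show "p \<in> Lset k (fst ` L) {\<alpha>. (0, \<alpha>) \<in> L} (\<lambda>X. {\<alpha>. (X, \<alpha>) \<in> L})"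
    unfolding Lset_def using sum_subspace_kform fibre_eq_coset by force
next
  fix p assume p: "p \<in> Lset k (fst ` L) {\<alpha>. (0, \<alpha>) \<in> L} (\<lambda>X. {\<alpha>. (X, \<alpha>) \<in> L})"
  obtain X \<alpha> where X\<alpha>: "p = (X, \<alpha>)" by force
  have "\<alpha> \<in> coset {\<alpha>. (0, \<alpha>) \<in> L} \<alpha>"
    using sum_subspace_zero by (simp add: mem_coset_self)
  with p show "p \<in> L"
    unfolding X\<alpha> Lset_def by simp
qed

context
  assumes iso: "isotropic k L"
begin

lemma isotropic_pairing: "p \<in> L \<Longrightarrow> q \<in> L \<Longrightarrow> pairing p q = fzero"
  using iso unfolding isotropic_def perp_def by blast

lemma E_skew_fibres: "E_skew (fst ` L) (\<lambda>X. {\<alpha>. (X, \<alpha>) \<in> L})"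
  unfolding E_skew_def
  by (auto intro!: pairing_eq_fzero_iff[THEN iffD1] isotropic_pairing)

lemma zero_fibre_subset_Ann:
  assumes "1 \<le> k"
  shows "{\<alpha>. (0, \<alpha>) \<in> L} \<subseteq> Ann k (fst ` L)"
proof (intro subsetI)
  fix \<alpha> assume \<alpha>: "\<alpha> \<in> {\<alpha>. (0, \<alpha>) \<in> L}"
  have "contr Y \<alpha> = fzero" if "(Y, \<beta>) \<in> L" for Y \<beta>
    using isotropic_pairing[OF that, of "(0, \<alpha>)"] \<alpha> contr_zero[OF sum_subspace_kform[OF that] assms]
    unfolding pairing_def by simp
  with \<alpha> show "\<alpha> \<in> Ann k (fst ` L)"
    unfolding Ann_def by (auto intro: sum_subspace_kform)
qed

end

end

theorem proposition3p2:
  fixes n k :: nat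
  assumes dimV: "DIM('v::euclidean_space) = n"
    and k1: "1 \<le> k" and kn: "k \<le> n - 1"
  shows "(\<forall>(E::'v set) A \<epsilon>.
            subspace E \<and> form_subspace k A \<and> A \<subseteq> Ann k E \<and>
            quot_linear_on k E A \<epsilon> \<and> E_skew E \<epsilon>
            \<longrightarrow> isotropic k (Lset k E A \<epsilon>))
       \<and> (\<forall>L :: ('v \<times> 'v form) set.
            sum_subspace k L \<and> isotropic k L \<longrightarrow>
            (let E = fst ` L; AL = {\<alpha>. (0, \<alpha>) \<in> L}; \<epsilon> = (\<lambda>X. {\<alpha>. (X, \<alpha>) \<in> L})
             in subspace E \<and> form_subspace k AL \<and> AL \<subseteq> Ann k E \<and>
                quot_linear_on k E AL \<epsilon> \<and> E_skew E \<epsilon> \<and>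
                L = Lset k E AL \<epsilon>))"
proof (intro conjI allI impI)
  fix E :: "'v set" and A \<epsilon>
  assume "subspace E \<and> form_subspace k A \<and> A \<subseteq> Ann k E \<and>
            quot_linear_on k E A \<epsilon> \<and> E_skew E \<epsilon>"
  then show "isotropic k (Lset k E A \<epsilon>)"
    using isotropic_Lset unfolding form_subspace_def by blast
next
  fix L :: "('v \<times> 'v form) set"
  assume "sum_subspace k L \<and> isotropic k L"
  then have L: "sum_subspace k L" and iso: "isotropic k L" by auto
  show "let E = fst ` L; AL = {\<alpha>. (0, \<alpha>) \<in> L}; \<epsilon> = (\<lambda>X. {\<alpha>. (X, \<alpha>) \<in> L})
             in subspace E \<and> form_subspace k AL \<and> AL \<subseteq> Ann k E \<and>
                quot_linear_on k E AL \<epsilon> \<and> E_skew E \<epsilon> \<and>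
                L = Lset k E AL \<epsilon>"
    unfolding Let_def
    by (intro conjI subspace_fst_image[OF L] form_subspace_zero_fibre[OF L]
        zero_fibre_subset_Ann[OF L iso k1] quot_linear_on_fibres[OF L]
        E_skew_fibres[OF L iso] Lset_fibres[OF L])
qed

end
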